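(* Let $(\Theta,\mathbf{Q},\leq)$ be a $\Theta$-projective system of size $t$ in an artin triangulated $R$-category $\mathcal{T}$, with triangles $K(i)\to Q(i)\to\Theta(i)\to K(i)[1]$. If $\mathrm{Hom}_\mathcal{T}(K(j)[2],\Theta(i))=0$ for all $i,j\in[1,t]$, then $(\Theta,\leq)$ is a $\Theta$-system of size $t$ in $\mathcal{T}$.
   Context: Artin triangulated $R$-category: triangulated, $R$ commutative artinian, Hom-sets finitely generated $R$-modules, $R$-bilinear composition, $R$-linear shift, Krull–Schmidt. $\mathfrak{F}(\mathcal{X})$: objects $M$ admitting distinguished triangles $M_{k-1}\to M_k\to X_k\to M_{k-1}[1]$ ($k=0,\dots,n$), $M_{-1}=0=X_0$, $M_n=M$, $X_k\in\mathcal{X}$ for $k\ge1$. A $\Theta$-projective system of size $t$: $\le$ a linear order on $[1,t]$; $\Theta(i)$ non-zero with $\mathrm{Hom}(\Theta(j),\Theta(i))=0$ for $j>i$; $Q(i)$ indecomposable with $Q=\bigoplus Q(i)$ satisfying $\mathrm{Hom}(Q,\Theta(j)[\pm1])=0$ for all $j$; for each $i$ a distinguished triangle $K(i)\to Q(i)\to\Theta(i)\to K(i)[1]$ with $K(i)\in\mathfrak{F}(\{\Theta(j):j>i\})$, $\mathrm{Hom}(K(i)[1],\Theta(i))=0$. A $\Theta$-system of size $t$: linear order $\le$ on $[1,t]$, indecomposable $\Theta(i)$, $\mathrm{Hom}(\Theta(j),\Theta(i))=0$ for $j>i$, $\mathrm{Hom}(\Theta(j),\Theta(i)[1])=0$ for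 $j\ge i$, $\mathrm{Hom}(\Theta(i),\Theta(j)[-1])=0$ for all $i,j$. *)

theory Defs
  imports Main
begin

text \<open>R is the whole of a type 'r of class comm_ring_1. A category is given by
 its object set, hom sets, composition (cmp g f = g o f), identities, the
 R-module structure on hom sets (madd, zer, smul), the shift functor [1]
 (shO on objects, shM on morphisms) and the class Tri of distinguished
 triangles (X, Y, Z, u, v, w) meaning X -u-> Y -v-> Z -w-> X[1].\<close>

record ('o, 'm, 'r) tcat =
  Ob   :: "'o set"
  Hom  :: "'o \<Rightarrow> 'o \<Rightarrow> 'm set"
  cmp  :: "'m \<Rightarrow> 'm \<Rightarrow> 'm"
  idm  :: "'o \<Rightarrow> 'm"
  madd :: "'m \<Rightarrow> 'm \<Rightarrow> 'm"
  zer  :: "'o \<Rightarrow> 'o \<Rightarrow> 'm"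
  smul :: "'r \<Rightarrow> 'm \<Rightarrow> 'm"
  shO  :: "'o \<Rightarrow> 'o"
  shM  :: "'m \<Rightarrow> 'm"
  Tri  :: "('o \<times> 'o \<times> 'o \<times> 'm \<times> 'm \<times> 'm) set"

definition mneg :: "('o, 'm, 'r::comm_ring_1) tcat \<Rightarrow> 'm \<Rightarrow> 'm" where
  "mneg C f = smul C (-1) f"

definition msub :: "('o, 'm, 'r::comm_ring_1) tcat \<Rightarrow> 'm \<Rightarrow> 'm \<Rightarrow> 'm" where
  "msub C f g = madd C f (mneg C g)"

definition msum :: "('o, 'm, 'r) tcat \<Rightarrow> 'o \<Rightarrow> 'o \<Rightarrow> 'm list \<Rightarrow> 'm" where
  "msum C X Y fs = foldr (madd C) fs (zer C X Y)"

definition shinv :: "('o, 'm, 'r) tcat \<Rightarrow> 'o \<Rightarrow> 'o" where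
  "shinv C Y = the_inv_into (Ob C) (shO C) Y"

definition homzero :: "('o, 'm, 'r) tcat \<Rightarrow> 'o \<Rightarrow> 'o \<Rightarrow> bool" where
  "homzero C X Y \<longleftrightarrow> Hom C X Y = {zer C X Y}"

definition is_zero :: "('o, 'm, 'r) tcat \<Rightarrow> 'o \<Rightarrow> bool" where
  "is_zero C X \<longleftrightarrow> X \<in> Ob C \<and> idm C X = zer C X X"

definition is_iso :: "('o, 'm, 'r) tcat \<Rightarrow> 'o \<Rightarrow> 'o \<Rightarrow> 'm \<Rightarrow> bool" where
  "is_iso C X Y f \<longleftrightarrow> f \<in> Hom C X Y \<and>
     (\<exists>g \<in> Hom C Y X. cmp C g f = idm C X \<and> cmp C f g = idm C Y)"

definition category :: "('o, 'm, 'r) tcat \<Rightarrow> bool" where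
  "category C \<longleftrightarrow>
     (\<forall>X Y. (X \<notin> Ob C \<or> Y \<notin> Ob C) \<longrightarrow> Hom C X Y = {}) \<and>
     (\<forall>X Y X' Y'. Hom C X Y \<inter> Hom C X' Y' \<noteq> {} \<longrightarrow> X = X' \<and> Y = Y') \<and>
     (\<forall>X \<in> Ob C. idm C X \<in> Hom C X X) \<and>
     (\<forall>X Y Z f g. f \<in> Hom C X Y \<longrightarrow> g \<in> Hom C Y Z \<longrightarrow> cmp C g f \<in> Hom C X Z) \<and>
     (\<forall>X Y Z W f g h. f \<in> Hom C X Y \<longrightarrow> g \<in> Hom C Y Z \<longrightarrow> h \<in> Hom C Z W \<longrightarrow>
        cmp C h (cmp C g f) = cmp C (cmp C h g) f) \<and>
     (\<forall>X Y f. f \<in> Hom C X Y \<longrightarrow> cmp C (idm C Y) f = f \<and> cmp C f (idm C X) = f)"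

definition r_linear :: "('o, 'm, 'r::comm_ring_1) tcat \<Rightarrow> bool" where
  "r_linear C \<longleftrightarrow>
     (\<forall>X \<in> Ob C. \<forall>Y \<in> Ob C.
        zer C X Y \<in> Hom C X Y \<and>
        (\<forall>f \<in> Hom C X Y. \<forall>g \<in> Hom C X Y. madd C f g \<in> Hom C X Y) \<and>
        (\<forall>r. \<forall>f \<in> Hom C X Y. smul C r f \<in> Hom C X Y) \<and>
        (\<forall>f \<in> Hom C X Y. \<forall>g \<in> Hom C X Y. \<forall>h \<in> Hom C X Y.
           madd C (madd C f g) h = madd C f (madd C g h)) \<and>
        (\<forall>f \<in> Hom C X Y. \<forall>g \<in> Hom C X Y. madd C f g = madd C g f) \<and>
        (\<forall>f \<in> Hom C X Y. madd C f (zer C X Y) = f) \<and>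
        (\<forall>f \<in> Hom C X Y. madd C f (smul C (-1) f) = zer C X Y) \<and>
        (\<forall>f \<in> Hom C X Y. smul C 1 f = f) \<and>
        (\<forall>r s. \<forall>f \<in> Hom C X Y. smul C (r * s) f = smul C r (smul C s f)) \<and>
        (\<forall>r s. \<forall>f \<in> Hom C X Y. smul C (r + s) f = madd C (smul C r f) (smul C s f)) \<and>
        (\<forall>r. \<forall>f \<in> Hom C X Y. \<forall>g \<in> Hom C X Y.
           smul C r (madd C f g) = madd C (smul C r f) (smul C r g))) \<and>
     (\<forall>X Y Z. \<forall>f \<in> Hom C X Y. \<forall>f' \<in> Hom C X Y. \<forall>g \<in> Hom C Y Z. \<forall>g' \<in> Hom C Y Z.
        cmp C g (madd C f f') = madd C (cmp C g f) (cmp C g f') \<and>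
        cmp C (madd C g g') f = madd C (cmp C g f) (cmp C g' f) \<and>
        (\<forall>r. cmp C g (smul C r f) = smul C r (cmp C g f) \<and>
             cmp C (smul C r g) f = smul C r (cmp C g f)))"

definition biprod :: "('o, 'm, 'r) tcat \<Rightarrow> nat set \<Rightarrow> (nat \<Rightarrow> 'o) \<Rightarrow> 'o
                       \<Rightarrow> (nat \<Rightarrow> 'm) \<Rightarrow> (nat \<Rightarrow> 'm) \<Rightarrow> bool" where
  "biprod C I A S \<iota> \<pi> \<longleftrightarrow> finite I \<and> S \<in> Ob C \<and>
     (\<forall>i \<in> I. A i \<in> Ob C \<and> \<iota> i \<in> Hom C (A i) S \<and> \<pi> i \<in> Hom C S (A i)) \<and>
     (\<forall>i \<in> I. \<forall>j \<in> I. cmp C (\<pi> i) (\<iota> j) = (if i = j then idm C (A i) else zer C (A j) (A i))) \<and>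
     msum C S S (map (\<lambda>i. cmp C (\<iota> i) (\<pi> i)) (sorted_list_of_set I)) = idm C S"

definition additive :: "('o, 'm, 'r) tcat \<Rightarrow> bool" where
  "additive C \<longleftrightarrow> (\<exists>Z. is_zero C Z) \<and>
     (\<forall>X \<in> Ob C. \<forall>Y \<in> Ob C. \<exists>S \<iota> \<pi>. biprod C {0, 1} (\<lambda>i. if i = 0 then X else Y) S \<iota> \<pi>)"

definition shift_ok :: "('o, 'm, 'r) tcat \<Rightarrow> bool" where
  "shift_ok C \<longleftrightarrow> bij_betw (shO C) (Ob C) (Ob C) \<and>
     (\<forall>X \<in> Ob C. \<forall>Y \<in> Ob C. bij_betw (shM C) (Hom C X Y) (Hom C (shO C X) (shO C Y))) \<and>
     (\<forall>X \<in> Ob C. shM C (idm C X) = idm C (shO C X)) \<and>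
     (\<forall>X Y Z f g. f \<in> Hom C X Y \<longrightarrow> g \<in> Hom C Y Z \<longrightarrow>
        shM C (cmp C g f) = cmp C (shM C g) (shM C f)) \<and>
     (\<forall>X Y. \<forall>f \<in> Hom C X Y. \<forall>g \<in> Hom C X Y. shM C (madd C f g) = madd C (shM C f) (shM C g)) \<and>
     (\<forall>X Y r. \<forall>f \<in> Hom C X Y. shM C (smul C r f) = smul C r (shM C f))"

definition triangulated_axioms :: "('o, 'm, 'r::comm_ring_1) tcat \<Rightarrow> bool" where
  "triangulated_axioms C \<longleftrightarrow>
   \<comment> \<open>distinguished triangles are triangles\<close>
   (\<forall>X Y Z u v w. (X, Y, Z, u, v, w) \<in> Tri C \<longrightarrow>
      X \<in> Ob C \<and> Y \<in> Ob C \<and> Z \<in> Ob C \<and>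
      u \<in> Hom C X Y \<and> v \<in> Hom C Y Z \<and> w \<in> Hom C Z (shO C X)) \<and>
   \<comment> \<open>TR0: closed under isomorphisms of triangles\<close>
   (\<forall>X Y Z u v w X' Y' Z' u' v' w' a b c.
      (X, Y, Z, u, v, w) \<in> Tri C \<longrightarrow>
      u' \<in> Hom C X' Y' \<longrightarrow> v' \<in> Hom C Y' Z' \<longrightarrow> w' \<in> Hom C Z' (shO C X') \<longrightarrow>
      is_iso C X X' a \<longrightarrow> is_iso C Y Y' b \<longrightarrow> is_iso C Z Z' c \<longrightarrow>
      cmp C b u = cmp C u' a \<longrightarrow> cmp C c v = cmp C v' b \<longrightarrow>
      cmp C (shM C a) w = cmp C w' c \<longrightarrow>
      (X', Y', Z', u', v', w') \<in> Tri C) \<and>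
   \<comment> \<open>TR1\<close>
   (\<forall>X \<in> Ob C. \<forall>Z. is_zero C Z \<longrightarrow>
      (X, X, Z, idm C X, zer C X Z, zer C Z (shO C X)) \<in> Tri C) \<and>
   (\<forall>X Y. \<forall>u \<in> Hom C X Y. \<exists>Z v w. (X, Y, Z, u, v, w) \<in> Tri C) \<and>
   \<comment> \<open>TR2: rotation\<close>
   (\<forall>X Y Z u v w. u \<in> Hom C X Y \<longrightarrow>
      ((X, Y, Z, u, v, w) \<in> Tri C \<longleftrightarrow> (Y, Z, shO C X, v, w, mneg C (shM C u)) \<in> Tri C)) \<and>
   \<comment> \<open>TR3: completion of morphisms of triangles\<close>
   (\<forall>X Y Z u v w X' Y' Z' u' v' w' a b.
      (X, Y, Z, u, v, w) \<in> Tri C \<longrightarrow> (X', Y', Z', u', v', w') \<in> Tri C \<longrightarrow>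
      a \<in> Hom C X X' \<longrightarrow> b \<in> Hom C Y Y' \<longrightarrow> cmp C b u = cmp C u' a \<longrightarrow>
      (\<exists>c \<in> Hom C Z Z'. cmp C c v = cmp C v' b \<and> cmp C (shM C a) w = cmp C w' c)) \<and>
   \<comment> \<open>TR4: octahedral axiom\<close>
   (\<forall>X Y Z Z' X' Y' u v j k l i m n.
      (X, Y, Z', u, j, k) \<in> Tri C \<longrightarrow>
      (Y, Z, X', v, l, i) \<in> Tri C \<longrightarrow>
      (X, Z, Y', cmp C v u, m, n) \<in> Tri C \<longrightarrow>
      (\<exists>f g. (Z', Y', X', f, g, cmp C (shM C j) i) \<in> Tri C \<and>
         cmp C f j = cmp C m v \<and> cmp C n f = k \<and>
         cmp C g m = l \<and> cmp C i g = cmp C (shM C u) n))"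

definition r_ideal :: "'r::comm_ring_1 set \<Rightarrow> bool" where
  "r_ideal I \<longleftrightarrow> 0 \<in> I \<and> (\<forall>a \<in> I. \<forall>b \<in> I. a + b \<in> I) \<and> (\<forall>r. \<forall>a \<in> I. r * a \<in> I)"

definition artinian_ring :: "'r::comm_ring_1 itself \<Rightarrow> bool" where
  "artinian_ring _ \<longleftrightarrow>
     (\<forall>I :: nat \<Rightarrow> 'r set. (\<forall>n. r_ideal (I n)) \<and> (\<forall>n. I (Suc n) \<subseteq> I n) \<longrightarrow>
        (\<exists>N. \<forall>n \<ge> N. I n = I N))"

definition fg_homs :: "('o, 'm, 'r) tcat \<Rightarrow> bool" where
  "fg_homs C \<longleftrightarrow> (\<forall>X \<in> Ob C. \<forall>Y \<in> Ob C. \<exists>gs. set gs \<subseteq> Hom C X Y \<and>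
     (\<forall>f \<in> Hom C X Y. \<exists>cs. length cs = length gs \<and>
        f = msum C X Y (map2 (smul C) cs gs)))"

definition local_end :: "('o, 'm, 'r::comm_ring_1) tcat \<Rightarrow> 'o \<Rightarrow> bool" where
  "local_end C X \<longleftrightarrow> X \<in> Ob C \<and> idm C X \<noteq> zer C X X \<and>
     (\<forall>f \<in> Hom C X X. is_iso C X X f \<or> is_iso C X X (msub C (idm C X) f))"

definition krull_schmidt :: "('o, 'm, 'r::comm_ring_1) tcat \<Rightarrow> bool" where
  "krull_schmidt C \<longleftrightarrow> (\<forall>X \<in> Ob C. \<exists>n A \<iota> \<pi>.
     biprod C {..<n} A X \<iota> \<pi> \<and> (\<forall>i < n. local_end C (A i)))"

definition artin_tri_cat :: "('o, 'm, 'r::comm_ring_1) tcat \<Rightarrow> bool" where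
  "artin_tri_cat C \<longleftrightarrow> artinian_ring TYPE('r) \<and> category C \<and> r_linear C \<and> additive C \<and>
     shift_ok C \<and> triangulated_axioms C \<and> fg_homs C \<and> krull_schmidt C"

definition indecomposable :: "('o, 'm, 'r) tcat \<Rightarrow> 'o \<Rightarrow> bool" where
  "indecomposable C X \<longleftrightarrow> X \<in> Ob C \<and> \<not> is_zero C X \<and>
     (\<forall>A \<iota> \<pi>. biprod C {0, 1} A X \<iota> \<pi> \<longrightarrow> is_zero C (A 0) \<or> is_zero C (A 1))"

text \<open>The filtration class F(Xs): triangles M_(k-1) \<rightarrow> M_k \<rightarrow> X_k \<rightarrow> M_(k-1)[1],
 k = 0..n, with M_(-1) = 0 = X_0, M_n = M, X_k in Xs for k \<ge> 1.
 Here Ms k stands for M_(k-1).\<close>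
definition filt :: "('o, 'm, 'r) tcat \<Rightarrow> 'o set \<Rightarrow> 'o \<Rightarrow> bool" where
  "filt C Xs M \<longleftrightarrow> (\<exists>n Ms Xo f g h.
     is_zero C (Ms 0) \<and> Ms (Suc n) = M \<and> is_zero C (Xo 0) \<and>
     (\<forall>k \<le> n. (Ms k, Ms (Suc k), Xo k, f k, g k, h k) \<in> Tri C) \<and>
     (\<forall>k \<in> {1..n}. Xo k \<in> Xs))"

definition lin_order_on :: "nat set \<Rightarrow> (nat \<Rightarrow> nat \<Rightarrow> bool) \<Rightarrow> bool" where
  "lin_order_on A le \<longleftrightarrow> (\<forall>x \<in> A. le x x) \<and>
     (\<forall>x \<in> A. \<forall>y \<in> A. le x y \<and> le y x \<longrightarrow> x = y) \<and>
     (\<forall>x \<in> A. \<forall>y \<in> A. \<forall>z \<in> A. le x y \<and> le y z \<longrightarrow> le x z) \<and>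
     (\<forall>x \<in> A. \<forall>y \<in> A. le x y \<or> le y x)"

text \<open>Theta-projective system of size t, together with its chosen triangles
 K(i) -\<alpha> i-> Q(i) -\<beta> i-> Theta(i) -\<gamma> i-> K(i)[1].  "j > i" means le i j and j \<noteq> i.\<close>
definition theta_proj_system :: "('o, 'm, 'r::comm_ring_1) tcat \<Rightarrow> nat \<Rightarrow> (nat \<Rightarrow> nat \<Rightarrow> bool)
     \<Rightarrow> (nat \<Rightarrow> 'o) \<Rightarrow> (nat \<Rightarrow> 'o) \<Rightarrow> (nat \<Rightarrow> 'o)
     \<Rightarrow> (nat \<Rightarrow> 'm) \<Rightarrow> (nat \<Rightarrow> 'm) \<Rightarrow> (nat \<Rightarrow> 'm) \<Rightarrow> bool" where
  "theta_proj_system C t le \<Theta> Q K \<alpha> \<beta> \<gamma> \<longleftrightarrow>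
     lin_order_on {1..t} le \<and>
     (\<forall>i \<in> {1..t}. \<Theta> i \<in> Ob C \<and> \<not> is_zero C (\<Theta> i)) \<and>
     (\<forall>i \<in> {1..t}. \<forall>j \<in> {1..t}. le i j \<and> j \<noteq> i \<longrightarrow> homzero C (\<Theta> j) (\<Theta> i)) \<and>
     (\<forall>i \<in> {1..t}. indecomposable C (Q i)) \<and>
     (\<exists>S \<iota> \<pi>. biprod C {1..t} Q S \<iota> \<pi> \<and>
        (\<forall>j \<in> {1..t}. homzero C S (shO C (\<Theta> j)) \<and> homzero C S (shinv C (\<Theta> j)))) \<and>
     (\<forall>i \<in> {1..t}. (K i, Q i, \<Theta> i, \<alpha> i, \<beta> i, \<gamma> i) \<in> Tri C \<and>
        filt C {\<Theta> j | j. j \<in> {1..t} \<and> le i j \<and> j \<noteq> i} (K i) \<and>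
        homzero C (shO C (K i)) (\<Theta> i))"

definition theta_system :: "('o, 'm, 'r::comm_ring_1) tcat \<Rightarrow> nat \<Rightarrow> (nat \<Rightarrow> nat \<Rightarrow> bool)
     \<Rightarrow> (nat \<Rightarrow> 'o) \<Rightarrow> bool" where
  "theta_system C t le \<Theta> \<longleftrightarrow>
     lin_order_on {1..t} le \<and>
     (\<forall>i \<in> {1..t}. indecomposable C (\<Theta> i)) \<and>
     (\<forall>i \<in> {1..t}. \<forall>j \<in> {1..t}. le i j \<and> j \<noteq> i \<longrightarrow> homzero C (\<Theta> j) (\<Theta> i)) \<and>
     (\<forall>i \<in> {1..t}. \<forall>j \<in> {1..t}. le i j \<longrightarrow> homzero C (\<Theta> j) (shO C (\<Theta> i))) \<and>
     (\<forall>i \<in> {1..t}. \<forall>j \<in> {1..t}. homzero C (\<Theta> i) (shinv C (\<Theta> j)))"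

end

theory Submission
  imports Defs
begin

text \<open>
  Every condition of a \<open>\<Theta>\<close>-system is a Hom-vanishing statement about \<open>\<Theta>(i)\<close>,
  obtained from the rotated triangle \<open>Q(i) \<rightarrow> \<Theta>(i) \<rightarrow> K(i)[1]\<close>: the long exact
  Hom-sequences reduce it to vanishing for \<open>Q(i)\<close>, which is part of the projective
  system, and for \<open>K(i)[1]\<close>. The latter follows by induction along the filtration of
  \<open>K(j)\<close> by the \<open>\<Theta>(l)\<close>, \<open>l > j\<close>, for \<open>Hom(\<Theta>(j), \<Theta>(i)[1])\<close> with \<open>i \<le> j\<close>, and from the
  extra hypothesis on \<open>K(j)[2]\<close> for \<open>Hom(\<Theta>(i), \<Theta>(j)[-1])\<close>.

  For indecomposability, an idempotent \<open>e\<close> of \<open>\<Theta>(i)\<close> lifts along \<open>Q(i) \<rightarrow> \<Theta>(i)\<close> to an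
  endomorphism \<open>\<psi>\<close> of \<open>Q(i)\<close>, since \<open>Hom(Q(i), K(i)[1]) = 0\<close>. By Krull--Schmidt the
  indecomposable \<open>Q(i)\<close> has a local endomorphism ring, so \<open>\<psi>\<close> or \<open>1 - \<psi>\<close> is invertible;
  accordingly the summand cut out by \<open>1 - e\<close> or by \<open>e\<close> is killed by \<open>Q(i) \<rightarrow> \<Theta>(i)\<close>, so
  it factors through \<open>K(i)[1]\<close> and vanishes because \<open>Hom(K(i)[1], \<Theta>(i)) = 0\<close>.
\<close>

locale artin_triangulated =
  fixes C :: "('o, 'm, 'r::comm_ring_1) tcat"
  assumes artin_tri_cat: "artin_tri_cat C"
begin

lemma category_C: "category C" and r_linear_C: "r_linear C" and additive_C: "additive C"
  and shift_ok_C: "shift_ok C" and triangulated_C: "triangulated_axioms C"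
  and krull_schmidt_C: "krull_schmidt C"
  using artin_tri_cat unfolding artin_tri_cat_def by auto

lemma hom_obD: "f \<in> Hom C X Y \<Longrightarrow> X \<in> Ob C \<and> Y \<in> Ob C"
  using category_C unfolding category_def by (elim conjE) blast

lemma idm_hom: "X \<in> Ob C \<Longrightarrow> idm C X \<in> Hom C X X"
  using category_C unfolding category_def by blast

lemma cmp_hom: "f \<in> Hom C X Y \<Longrightarrow> g \<in> Hom C Y Z \<Longrightarrow> cmp C g f \<in> Hom C X Z"
  using category_C unfolding category_def by (elim conjE) blast

lemma cmp_assoc: "f \<in> Hom C X Y \<Longrightarrow> g \<in> Hom C Y Z \<Longrightarrow> h \<in> Hom C Z W \<Longrightarrow>
    cmp C h (cmp C g f) = cmp C (cmp C h g) f"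
  using category_C unfolding category_def by (elim conjE) blast

lemma cmp_idm_left: "f \<in> Hom C X Y \<Longrightarrow> cmp C (idm C Y) f = f"
  using category_C unfolding category_def by blast

lemma cmp_idm_right: "f \<in> Hom C X Y \<Longrightarrow> cmp C f (idm C X) = f"
  using category_C unfolding category_def by blast

lemmas hom_module = r_linear_C[unfolded r_linear_def, THEN conjunct1, rule_format]
lemmas cmp_bilinear = r_linear_C[unfolded r_linear_def, THEN conjunct2, rule_format]

lemma zer_hom: "X \<in> Ob C \<Longrightarrow> Y \<in> Ob C \<Longrightarrow> zer C X Y \<in> Hom C X Y"
  using hom_module[of X Y] by simp

lemma madd_hom:
  assumes "f \<in> Hom C X Y" "g \<in> Hom C X Y"
  shows "madd C f g \<in> Hom C X Y"
  using hom_module[of X Y] hom_obD[OF assms(1)] assms by simp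

lemma smul_hom:
  assumes "f \<in> Hom C X Y"
  shows "smul C r f \<in> Hom C X Y"
  using hom_module[of X Y] hom_obD[OF assms(1)] assms by simp

lemma madd_assoc:
  assumes "f \<in> Hom C X Y" "g \<in> Hom C X Y" "h \<in> Hom C X Y"
  shows "madd C (madd C f g) h = madd C f (madd C g h)"
  using hom_module[of X Y] hom_obD[OF assms(1)] assms by blast

lemma madd_commute:
  assumes "f \<in> Hom C X Y" "g \<in> Hom C X Y"
  shows "madd C f g = madd C g f"
  using hom_module[of X Y] hom_obD[OF assms(1)] assms by blast

lemma madd_zer:
  assumes "f \<in> Hom C X Y"
  shows "madd C f (zer C X Y) = f"
  using hom_module[of X Y] hom_obD[OF assms(1)] assms by blast

lemma madd_mneg_self:
  assumes "f \<in> Hom C X Y"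
  shows "madd C f (mneg C f) = zer C X Y"
  using hom_module[of X Y] hom_obD[OF assms(1)] assms unfolding mneg_def by blast

lemma smul_one:
  assumes "f \<in> Hom C X Y"
  shows "smul C 1 f = f"
  using hom_module[of X Y] hom_obD[OF assms(1)] assms by blast

lemma smul_mult:
  assumes "f \<in> Hom C X Y"
  shows "smul C (r * s) f = smul C r (smul C s f)"
  using hom_module[of X Y] hom_obD[OF assms(1)] assms by blast

lemma smul_madd:
  assumes "f \<in> Hom C X Y" "g \<in> Hom C X Y"
  shows "smul C r (madd C f g) = madd C (smul C r f) (smul C r g)"
  using hom_module[of X Y] hom_obD[OF assms(1)] assms by blast

lemma cmp_madd_right: "f \<in> Hom C X Y \<Longrightarrow> f' \<in> Hom C X Y \<Longrightarrow> g \<in> Hom C Y Z \<Longrightarrow>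
    cmp C g (madd C f f') = madd C (cmp C g f) (cmp C g f')"
  using cmp_bilinear by blast

lemma cmp_madd_left: "f \<in> Hom C X Y \<Longrightarrow> g \<in> Hom C Y Z \<Longrightarrow> g' \<in> Hom C Y Z \<Longrightarrow>
    cmp C (madd C g g') f = madd C (cmp C g f) (cmp C g' f)"
  using cmp_bilinear by blast

lemma cmp_smul_right: "f \<in> Hom C X Y \<Longrightarrow> g \<in> Hom C Y Z \<Longrightarrow>
    cmp C g (smul C r f) = smul C r (cmp C g f)"
  using cmp_bilinear by blast

lemma cmp_smul_left: "f \<in> Hom C X Y \<Longrightarrow> g \<in> Hom C Y Z \<Longrightarrow>
    cmp C (smul C r g) f = smul C r (cmp C g f)"
  using cmp_bilinear by blast

lemma mneg_hom: "f \<in> Hom C X Y \<Longrightarrow> mneg C f \<in> Hom C X Y"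
  unfolding mneg_def by (rule smul_hom)

lemma msub_hom: "f \<in> Hom C X Y \<Longrightarrow> g \<in> Hom C X Y \<Longrightarrow> msub C f g \<in> Hom C X Y"
  unfolding msub_def by (simp add: madd_hom mneg_hom)

lemma mneg_mneg: "f \<in> Hom C X Y \<Longrightarrow> mneg C (mneg C f) = f"
  unfolding mneg_def using smul_mult[of f X Y "-1" "-1"] smul_one by simp

lemma madd_idem_zer:
  assumes f: "f \<in> Hom C X Y" and idem: "madd C f f = f"
  shows "f = zer C X Y"
proof -
  have "madd C f (mneg C f) = madd C (madd C f f) (mneg C f)" using idem by simp
  also have "\<dots> = madd C f (zer C X Y)"
    using madd_assoc[OF f f mneg_hom[OF f]] madd_mneg_self[OF f] by simp
  finally show ?thesis using madd_mneg_self[OF f] madd_zer[OF f] by simp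
qed

lemma cmp_zer_right:
  assumes g: "g \<in> Hom C Y Z" and X: "X \<in> Ob C"
  shows "cmp C g (zer C X Y) = zer C X Z"
proof -
  have z: "zer C X Y \<in> Hom C X Y" using zer_hom X hom_obD[OF g] by blast
  have "madd C (cmp C g (zer C X Y)) (cmp C g (zer C X Y)) = cmp C g (zer C X Y)"
    using cmp_madd_right[OF z z g] madd_zer[OF z] by simp
  then show ?thesis using madd_idem_zer cmp_hom[OF z g] by blast
qed

lemma cmp_zer_left:
  assumes f: "f \<in> Hom C X Y" and Z: "Z \<in> Ob C"
  shows "cmp C (zer C Y Z) f = zer C X Z"
proof -
  have z: "zer C Y Z \<in> Hom C Y Z" using zer_hom Z hom_obD[OF f] by blast
  have "madd C (cmp C (zer C Y Z) f) (cmp C (zer C Y Z) f) = cmp C (zer C Y Z) f"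
    using cmp_madd_left[OF f z z] madd_zer[OF z] by simp
  then show ?thesis using madd_idem_zer cmp_hom[OF f z] by blast
qed

lemma smul_zer:
  assumes "X \<in> Ob C" "Y \<in> Ob C"
  shows "smul C r (zer C X Y) = zer C X Y"
proof -
  have z: "zer C X Y \<in> Hom C X Y" using zer_hom assms by blast
  have "madd C (smul C r (zer C X Y)) (smul C r (zer C X Y)) = smul C r (zer C X Y)"
    using smul_madd[OF z z] madd_zer[OF z] by simp
  then show ?thesis using madd_idem_zer smul_hom[OF z] by blast
qed

lemma msub_zer: "f \<in> Hom C X Y \<Longrightarrow> msub C f (zer C X Y) = f"
  unfolding msub_def mneg_def using smul_zer hom_obD madd_zer by metis

lemma msub_self: "f \<in> Hom C X Y \<Longrightarrow> msub C f f = zer C X Y"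
  unfolding msub_def by (rule madd_mneg_self)

lemma madd_msub_cancel:
  assumes f: "f \<in> Hom C X Y" and g: "g \<in> Hom C X Y"
  shows "madd C g (msub C f g) = f"
proof -
  have g': "mneg C g \<in> Hom C X Y" using mneg_hom[OF g] .
  have "madd C g (msub C f g) = madd C (madd C g f) (mneg C g)"
    unfolding msub_def using madd_assoc[OF g f g'] by simp
  also have "\<dots> = madd C f (madd C g (mneg C g))"
    using madd_commute[OF g f] madd_assoc[OF f g g'] by simp
  finally show ?thesis using madd_mneg_self[OF g] madd_zer[OF f] by simp
qed

lemma msub_eq_zerD:
  assumes f: "f \<in> Hom C X Y" and g: "g \<in> Hom C X Y" and "msub C f g = zer C X Y"
  shows "f = g"
  using madd_msub_cancel[OF f g] assms(3) madd_zer[OF g] by simp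

lemma cmp_msub_right:
  assumes f: "f \<in> Hom C X Y" and f': "f' \<in> Hom C X Y" and g: "g \<in> Hom C Y Z"
  shows "cmp C g (msub C f f') = msub C (cmp C g f) (cmp C g f')"
  unfolding msub_def mneg_def
  using cmp_madd_right[OF f smul_hom[OF f'] g] cmp_smul_right[OF f' g] by simp

lemma cmp_msub_left:
  assumes f: "f \<in> Hom C X Y" and g: "g \<in> Hom C Y Z" and g': "g' \<in> Hom C Y Z"
  shows "cmp C (msub C g g') f = msub C (cmp C g f) (cmp C g' f)"
  unfolding msub_def mneg_def
  using cmp_madd_left[OF f g smul_hom[OF g']] cmp_smul_left[OF f g'] by simp

lemma shO_ob: "X \<in> Ob C \<Longrightarrow> shO C X \<in> Ob C"
  using shift_ok_C unfolding shift_ok_def bij_betw_def by blast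

lemma shM_bij: "X \<in> Ob C \<Longrightarrow> Y \<in> Ob C \<Longrightarrow>
    bij_betw (shM C) (Hom C X Y) (Hom C (shO C X) (shO C Y))"
  using shift_ok_C unfolding shift_ok_def by blast

lemma shM_hom: "f \<in> Hom C X Y \<Longrightarrow> shM C f \<in> Hom C (shO C X) (shO C Y)"
  using shM_bij hom_obD bij_betwE by metis

lemma shM_inj: "f \<in> Hom C X Y \<Longrightarrow> g \<in> Hom C X Y \<Longrightarrow> shM C f = shM C g \<Longrightarrow> f = g"
  using shM_bij hom_obD unfolding bij_betw_def inj_on_def by metis

lemma shM_surj: "X \<in> Ob C \<Longrightarrow> Y \<in> Ob C \<Longrightarrow> h \<in> Hom C (shO C X) (shO C Y) \<Longrightarrow>
    \<exists>g \<in> Hom C X Y. shM C g = h"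
  using shM_bij[of X Y] unfolding bij_betw_def by force

lemma shM_madd: "f \<in> Hom C X Y \<Longrightarrow> g \<in> Hom C X Y \<Longrightarrow>
    shM C (madd C f g) = madd C (shM C f) (shM C g)"
  using shift_ok_C unfolding shift_ok_def by blast

lemma shM_zer:
  assumes "X \<in> Ob C" "Y \<in> Ob C"
  shows "shM C (zer C X Y) = zer C (shO C X) (shO C Y)"
proof -
  have z: "zer C X Y \<in> Hom C X Y" using zer_hom assms by blast
  have "madd C (shM C (zer C X Y)) (shM C (zer C X Y)) = shM C (zer C X Y)"
    using shM_madd[OF z z] madd_zer[OF z] by simp
  then show ?thesis using madd_idem_zer shM_hom[OF z] by blast
qed

lemma shinv_ob: "Y \<in> Ob C \<Longrightarrow> shinv C Y \<in> Ob C"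
  and shO_shinv: "Y \<in> Ob C \<Longrightarrow> shO C (shinv C Y) = Y"
  using shift_ok_C the_inv_into_into[of "shO C" "Ob C" Y "Ob C"] f_the_inv_into_f[of "shO C" "Ob C" Y]
  unfolding shinv_def shift_ok_def bij_betw_def by auto

lemmas tri_axioms = triangulated_C[unfolded triangulated_axioms_def]

lemma tri_homs:
  assumes "(X, Y, Z, u, v, w) \<in> Tri C"
  shows "X \<in> Ob C" "Y \<in> Ob C" "Z \<in> Ob C"
    and "u \<in> Hom C X Y" "v \<in> Hom C Y Z" "w \<in> Hom C Z (shO C X)"
  using tri_axioms[THEN conjunct1] assms by blast+

lemma tri_idm: "X \<in> Ob C \<Longrightarrow> is_zero C Z \<Longrightarrow>
    (X, X, Z, idm C X, zer C X Z, zer C Z (shO C X)) \<in> Tri C"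
  using tri_axioms[THEN conjunct2, THEN conjunct2, THEN conjunct1] by blast

lemma tri_exists: "u \<in> Hom C X Y \<Longrightarrow> \<exists>Z v w. (X, Y, Z, u, v, w) \<in> Tri C"
  using tri_axioms[THEN conjunct2, THEN conjunct2, THEN conjunct2, THEN conjunct1] by blast

lemma tri_rotate_iff: "u \<in> Hom C X Y \<Longrightarrow>
    (X, Y, Z, u, v, w) \<in> Tri C \<longleftrightarrow> (Y, Z, shO C X, v, w, mneg C (shM C u)) \<in> Tri C"
  using tri_axioms[THEN conjunct2, THEN conjunct2, THEN conjunct2, THEN conjunct2, THEN conjunct1]
  by blast

lemma tri_rotate: "(X, Y, Z, u, v, w) \<in> Tri C \<Longrightarrow> (Y, Z, shO C X, v, w, mneg C (shM C u)) \<in> Tri C"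
  using tri_rotate_iff tri_homs(4) by blast

lemma tri_complete:
  assumes "(X, Y, Z, u, v, w) \<in> Tri C" "(X', Y', Z', u', v', w') \<in> Tri C"
    and "a \<in> Hom C X X'" "b \<in> Hom C Y Y'" "cmp C b u = cmp C u' a"
  shows "\<exists>c \<in> Hom C Z Z'. cmp C c v = cmp C v' b \<and> cmp C (shM C a) w = cmp C w' c"
  using tri_axioms[THEN conjunct2, THEN conjunct2, THEN conjunct2, THEN conjunct2, THEN conjunct2,
      THEN conjunct1] assms by blast

lemma tri_shift_exists:
  assumes "(X, Y, Z, u, v, w) \<in> Tri C"
  shows "\<exists>u' v' w'. (shO C X, shO C Y, shO C Z, u', v', w') \<in> Tri C"
  using tri_rotate[OF tri_rotate[OF tri_rotate[OF assms]]] by blast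

lemma zero_exists: "\<exists>Z. is_zero C Z"
  using additive_C unfolding additive_def by blast

lemma is_zero_ob: "is_zero C Z \<Longrightarrow> Z \<in> Ob C"
  unfolding is_zero_def by blast

lemma is_zero_src:
  assumes Z: "is_zero C Z" and f: "f \<in> Hom C Z Y"
  shows "f = zer C Z Y"
proof -
  have "f = cmp C f (zer C Z Z)" using cmp_idm_right[OF f] Z unfolding is_zero_def by simp
  then show ?thesis using cmp_zer_right[OF f is_zero_ob[OF Z]] by simp
qed

lemma is_zero_tgt:
  assumes Z: "is_zero C Z" and f: "f \<in> Hom C Y Z"
  shows "f = zer C Y Z"
proof -
  have "f = cmp C (zer C Z Z) f" using cmp_idm_left[OF f] Z unfolding is_zero_def by simp
  then show ?thesis using cmp_zer_left[OF f is_zero_ob[OF Z]] by simp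
qed

lemma is_zero_shO:
  assumes Z: "is_zero C Z"
  shows "is_zero C (shO C Z)"
proof -
  have Zob: "Z \<in> Ob C" using is_zero_ob[OF Z] .
  have "idm C (shO C Z) = shM C (idm C Z)" using shift_ok_C Zob unfolding shift_ok_def by simp
  also have "\<dots> = zer C (shO C Z) (shO C Z)" using Z shM_zer[OF Zob Zob] unfolding is_zero_def by simp
  finally show ?thesis unfolding is_zero_def using shO_ob[OF Zob] by blast
qed

lemma tri_cmp_zer:
  assumes T: "(X, Y, Z, u, v, w) \<in> Tri C"
  shows "cmp C v u = zer C X Z"
proof -
  obtain Z0 where Z0: "is_zero C Z0" using zero_exists by blast
  note h = tri_homs[OF T]
  have "cmp C u (idm C X) = cmp C u (idm C X)" ..
  then obtain c where "c \<in> Hom C Z0 Z" "cmp C c (zer C X Z0) = cmp C v u"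
    using tri_complete[OF tri_idm[OF h(1) Z0] T idm_hom[OF h(1)] h(4)] by blast
  then show ?thesis using cmp_zer_right h(1) by metis
qed

text \<open>The lift comes from completing a morphism out of the rotated trivial triangle on W.\<close>
lemma tri_cov_exact:
  assumes T: "(X, Y, Z, u, v, w) \<in> Tri C" and f: "f \<in> Hom C W Y"
    and vf: "cmp C v f = zer C W Z"
  shows "\<exists>g \<in> Hom C W X. cmp C u g = f"
proof -
  obtain Z0 where Z0: "is_zero C Z0" using zero_exists by blast
  note h = tri_homs[OF T]
  have W: "W \<in> Ob C" using hom_obD f by blast
  have z: "zer C Z0 Z \<in> Hom C Z0 Z" using zer_hom is_zero_ob[OF Z0] h(3) by blast
  have "cmp C (zer C Z0 Z) (zer C W Z0) = cmp C v f"
    using cmp_zer_right[OF z W] vf by simp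
  then obtain c where c: "c \<in> Hom C (shO C W) (shO C X)"
    "cmp C (shM C f) (mneg C (shM C (idm C W))) = cmp C (mneg C (shM C u)) c"
    using tri_complete[OF tri_rotate[OF tri_idm[OF W Z0]] tri_rotate[OF T] f z] by blast
  have f1: "shM C f \<in> Hom C (shO C W) (shO C Y)" using shM_hom f by blast
  have u1: "shM C u \<in> Hom C (shO C X) (shO C Y)" using shM_hom h(4) by blast
  have "shM C (idm C W) = idm C (shO C W)" using shift_ok_C W unfolding shift_ok_def by simp
  then have "mneg C (shM C f) = mneg C (cmp C (shM C u) c)"
    using c(2) cmp_smul_right[OF idm_hom[OF shO_ob[OF W]] f1] cmp_idm_right[OF f1]
      cmp_smul_left[OF c(1) u1] unfolding mneg_def by simp
  then have e: "shM C f = cmp C (shM C u) c"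
    using mneg_mneg f1 cmp_hom[OF c(1) u1] by metis
  obtain g where g: "g \<in> Hom C W X" "shM C g = c" using shM_surj[OF W h(1) c(1)] by blast
  have "shM C (cmp C u g) = shM C f"
    using shift_ok_C g h(4) e unfolding shift_ok_def by auto
  then have "cmp C u g = f" using shM_inj cmp_hom[OF g(1) h(4)] f by blast
  then show ?thesis using g by blast
qed

lemma tri_contra_exact:
  assumes T: "(X, Y, Z, u, v, w) \<in> Tri C" and f: "f \<in> Hom C Y V"
    and fu: "cmp C f u = zer C X V"
  shows "\<exists>g \<in> Hom C Z V. cmp C g v = f"
proof -
  obtain Z0 where Z0: "is_zero C Z0" using zero_exists by blast
  note h = tri_homs[OF T]
  have V: "V \<in> Ob C" using hom_obD f by blast
  have Z0ob: "Z0 \<in> Ob C" using is_zero_ob[OF Z0] .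
  have z: "zer C Z0 V \<in> Hom C Z0 V" using zer_hom Z0ob V by blast
  have "mneg C (shM C (zer C Z0 V)) = zer C (shO C Z0) (shO C V)"
    unfolding mneg_def using shM_zer[OF Z0ob V] smul_zer shO_ob Z0ob V by simp
  then have "(V, V, shO C Z0, idm C V, zer C V (shO C Z0), mneg C (shM C (zer C Z0 V))) \<in> Tri C"
    using tri_idm[OF V is_zero_shO[OF Z0]] by simp
  then have T0: "(Z0, V, V, zer C Z0 V, idm C V, zer C V (shO C Z0)) \<in> Tri C"
    using tri_rotate_iff[OF z] by blast
  have a: "zer C X Z0 \<in> Hom C X Z0" using zer_hom Z0ob h(1) by blast
  have "cmp C f u = cmp C (zer C Z0 V) (zer C X Z0)" using cmp_zer_right[OF z h(1)] fu by simp
  then obtain c where "c \<in> Hom C Z V" "cmp C c v = cmp C (idm C V) f"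
    using tri_complete[OF T T0 a f] by blast
  then show ?thesis using cmp_idm_left[OF f] by metis
qed

lemma homzero_I:
  assumes "X \<in> Ob C" "Y \<in> Ob C" "\<And>f. f \<in> Hom C X Y \<Longrightarrow> f = zer C X Y"
  shows "homzero C X Y"
  unfolding homzero_def using zer_hom assms by blast

lemma homzero_D: "homzero C X Y \<Longrightarrow> f \<in> Hom C X Y \<Longrightarrow> f = zer C X Y"
  unfolding homzero_def by blast

lemma homzero_obD: "homzero C X Y \<Longrightarrow> X \<in> Ob C \<and> Y \<in> Ob C"
  unfolding homzero_def using hom_obD by blast

lemma is_zero_homzero_src: "is_zero C Z \<Longrightarrow> Y \<in> Ob C \<Longrightarrow> homzero C Z Y"
  using homzero_I is_zero_ob is_zero_src by metis

lemma is_zero_homzero_tgt: "is_zero C Z \<Longrightarrow> Y \<in> Ob C \<Longrightarrow> homzero C Y Z"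
  using homzero_I is_zero_ob is_zero_tgt by metis

lemma homzero_shO:
  assumes H: "homzero C X Y"
  shows "homzero C (shO C X) (shO C Y)"
proof -
  have X: "X \<in> Ob C" and Y: "Y \<in> Ob C" using homzero_obD[OF H] by auto
  show ?thesis
  proof (rule homzero_I)
    show "shO C X \<in> Ob C" "shO C Y \<in> Ob C" using shO_ob X Y by auto
    fix g assume "g \<in> Hom C (shO C X) (shO C Y)"
    then obtain h where "h \<in> Hom C X Y" "shM C h = g" using shM_surj X Y by blast
    then show "g = zer C (shO C X) (shO C Y)" using homzero_D[OF H] shM_zer[OF X Y] by metis
  qed
qed

lemma homzero_shO_cancel:
  assumes X: "X \<in> Ob C" and Y: "Y \<in> Ob C" and H: "homzero C (shO C X) (shO C Y)"
  shows "homzero C X Y"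
proof (rule homzero_I[OF X Y])
  fix f assume f: "f \<in> Hom C X Y"
  have "shM C f = shM C (zer C X Y)"
    using homzero_D[OF H shM_hom[OF f]] shM_zer[OF X Y] by simp
  then show "f = zer C X Y" using shM_inj f zer_hom X Y by blast
qed

lemma tri_homzero_middle_src:
  assumes T: "(X, Y, Z, u, v, w) \<in> Tri C" and HX: "homzero C X V" and HZ: "homzero C Z V"
  shows "homzero C Y V"
proof -
  note h = tri_homs[OF T]
  have V: "V \<in> Ob C" using homzero_obD[OF HX] by blast
  show ?thesis
  proof (rule homzero_I[OF h(2) V])
    fix f assume f: "f \<in> Hom C Y V"
    have "cmp C f u = zer C X V" using homzero_D[OF HX cmp_hom[OF h(4) f]] .
    then obtain g where "g \<in> Hom C Z V" "cmp C g v = f" using tri_contra_exact[OF T f] by blast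
    then show "f = zer C Y V" using homzero_D[OF HZ] cmp_zer_left[OF h(5) V] by metis
  qed
qed

lemma tri_homzero_middle_tgt:
  assumes T: "(X, Y, Z, u, v, w) \<in> Tri C" and HX: "homzero C W X" and HZ: "homzero C W Z"
  shows "homzero C W Y"
proof -
  note h = tri_homs[OF T]
  have W: "W \<in> Ob C" using homzero_obD[OF HX] by blast
  show ?thesis
  proof (rule homzero_I[OF W h(2)])
    fix f assume f: "f \<in> Hom C W Y"
    have "cmp C v f = zer C W Z" using homzero_D[OF HZ cmp_hom[OF f h(5)]] .
    then obtain g where "g \<in> Hom C W X" "cmp C u g = f" using tri_cov_exact[OF T f] by blast
    then show "f = zer C W Y" using homzero_D[OF HX] cmp_zer_right[OF h(4) W] by metis
  qed
qed

lemma filt_induct: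
  assumes F: "filt C Xs M"
    and zero: "\<And>Z. is_zero C Z \<Longrightarrow> P Z"
    and gen: "\<And>X. X \<in> Xs \<Longrightarrow> P X"
    and ext: "\<And>X Y Z u v w. (X, Y, Z, u, v, w) \<in> Tri C \<Longrightarrow> P X \<Longrightarrow> P Z \<Longrightarrow> P Y"
  shows "P M"
proof -
  obtain n Ms Xo f g h where Ms0: "is_zero C (Ms 0)" and Msn: "Ms (Suc n) = M"
    and Xo0: "is_zero C (Xo 0)"
    and T: "\<forall>k \<le> n. (Ms k, Ms (Suc k), Xo k, f k, g k, h k) \<in> Tri C"
    and Xo: "\<forall>k \<in> {1..n}. Xo k \<in> Xs"
    using F unfolding filt_def by blast
  have "P (Ms k)" if "k \<le> Suc n" for k
    using that
  proof (induction k)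
    case 0
    show ?case using zero[OF Ms0] by simp
  next
    case (Suc k)
    have "P (Xo k)" using zero[OF Xo0] gen Xo Suc.prems by (cases k) auto
    moreover have "P (Ms k)" using Suc by simp
    moreover have "(Ms k, Ms (Suc k), Xo k, f k, g k, h k) \<in> Tri C" using T Suc.prems by simp
    ultimately show ?case using ext by blast
  qed
  then show ?thesis using Msn by blast
qed

lemma filt_homzero_src:
  assumes F: "filt C Xs M" and Y: "Y \<in> Ob C" and H: "\<forall>X \<in> Xs. homzero C X Y"
  shows "homzero C M Y"
  using F
proof (rule filt_induct)
  show "homzero C Z Y" if "is_zero C Z" for Z
    using is_zero_homzero_src[OF that Y] .
  show "homzero C X Y" if "X \<in> Xs" for X
    using H that by blast
  show "homzero C M' Y"
    if "(X, M', Z, u, v, w) \<in> Tri C" "homzero C X Y" "homzero C Z Y" for X M' Z u v w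
    using tri_homzero_middle_src that by blast
qed

lemma filt_homzero_shO_tgt:
  assumes F: "filt C Xs M" and W: "W \<in> Ob C" and H: "\<forall>X \<in> Xs. homzero C W (shO C X)"
  shows "homzero C W (shO C M)"
  using F
proof (rule filt_induct)
  show "homzero C W (shO C Z)" if "is_zero C Z" for Z
    using is_zero_homzero_tgt[OF is_zero_shO[OF that] W] .
  show "homzero C W (shO C X)" if "X \<in> Xs" for X
    using H that by blast
  show "homzero C W (shO C Y)"
    if "(X, Y, Z, u, v, w) \<in> Tri C" "homzero C W (shO C X)" "homzero C W (shO C Z)"
    for X Y Z u v w
    using tri_shift_exists[OF that(1)] tri_homzero_middle_tgt that(2,3) by blast
qed

lemma biprod_summand_homzero:
  assumes B: "biprod C I A S \<iota> \<pi>" and i: "i \<in> I" and H: "homzero C S Y"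
  shows "homzero C (A i) Y"
proof -
  have A: "A i \<in> Ob C" and \<iota>: "\<iota> i \<in> Hom C (A i) S" and \<pi>: "\<pi> i \<in> Hom C S (A i)"
    and \<pi>\<iota>: "cmp C (\<pi> i) (\<iota> i) = idm C (A i)"
    using B i unfolding biprod_def by auto
  have Y: "Y \<in> Ob C" using homzero_obD[OF H] by blast
  show ?thesis
  proof (rule homzero_I[OF A Y])
    fix f assume f: "f \<in> Hom C (A i) Y"
    have "f = cmp C (cmp C f (\<pi> i)) (\<iota> i)"
      using cmp_idm_right[OF f] cmp_assoc[OF \<iota> \<pi> f] \<pi>\<iota> by simp
    also have "\<dots> = zer C (A i) Y"
      using homzero_D[OF H cmp_hom[OF \<pi> f]] cmp_zer_left[OF \<iota> Y] by simp
    finally show "f = zer C (A i) Y" .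
  qed
qed

lemma split_epi_tri_zer:
  assumes p: "p \<in> Hom C X A" and i: "i \<in> Hom C A X" and pi: "cmp C p i = idm C A"
  shows "\<exists>B u. (B, X, A, u, p, zer C A (shO C B)) \<in> Tri C"
proof -
  obtain Z v w where T: "(X, A, Z, p, v, w) \<in> Tri C" using tri_exists[OF p] by blast
  note h = tri_homs[OF T]
  have "v = cmp C (cmp C v p) i"
    using cmp_idm_right[OF h(5)] cmp_assoc[OF i p h(5)] pi by simp
  then have v: "v = zer C A Z" using tri_cmp_zer[OF T] cmp_zer_left[OF i h(3)] by simp
  define B where "B = shinv C Z"
  have B: "B \<in> Ob C" "shO C B = Z" using shinv_ob shO_shinv h(3) B_def by auto
  obtain u where u: "u \<in> Hom C B X" "shM C u = mneg C w"
    using shM_surj[OF B(1) h(1), of "mneg C w"] mneg_hom[OF h(6)] B(2) by auto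
  have "mneg C (shM C u) = w" using u(2) mneg_mneg[OF h(6)] by simp
  then have "(X, A, shO C B, p, zer C A (shO C B), mneg C (shM C u)) \<in> Tri C"
    using T v B(2) by simp
  then show ?thesis using tri_rotate_iff[OF u(1)] by blast
qed

lemma tri_zer_third_mono:
  assumes T: "(B, X, A, u, p, zer C A (shO C B)) \<in> Tri C"
    and g: "g \<in> Hom C W B" and ug: "cmp C u g = zer C W X"
  shows "g = zer C W B"
proof -
  note h = tri_homs[OF T]
  define A' where "A' = shinv C A"
  have A': "A' \<in> Ob C" "shO C A' = A" using shinv_ob shO_shinv h(3) A'_def by auto
  have z: "zer C A' B \<in> Hom C A' B" using zer_hom A'(1) h(1) by blast
  have "mneg C (shM C (zer C A' B)) = zer C A (shO C B)"
    unfolding mneg_def using shM_zer[OF A'(1) h(1)] smul_zer[OF h(3) shO_ob[OF h(1)]] A'(2) by simp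
  then have "(B, X, shO C A', u, p, mneg C (shM C (zer C A' B))) \<in> Tri C" using T A'(2) by simp
  then have "(A', B, X, zer C A' B, u, p) \<in> Tri C" using tri_rotate_iff[OF z] by blast
  then obtain r where "r \<in> Hom C W A'" "cmp C (zer C A' B) r = g"
    using tri_cov_exact[OF _ g ug] by blast
  then show ?thesis using cmp_zer_left h(1) by metis
qed

text \<open>The idempotent \<open>id - i p\<close> is killed by \<open>p\<close>, hence factors as \<open>u q\<close>;
  the identities for \<open>q\<close> follow because \<open>u\<close> is a monomorphism.\<close>
lemma tri_zer_third_split:
  assumes T: "(B, X, A, u, p, zer C A (shO C B)) \<in> Tri C"
    and i: "i \<in> Hom C A X" and pi: "cmp C p i = idm C A"
  shows "\<exists>q \<in> Hom C X B. cmp C q u = idm C B \<and> cmp C q i = zer C A B \<and>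
    madd C (cmp C i p) (cmp C u q) = idm C X"
proof -
  note h = tri_homs[OF T]
  define \<phi> where "\<phi> = msub C (idm C X) (cmp C i p)"
  have ip: "cmp C i p \<in> Hom C X X" using cmp_hom[OF h(5) i] .
  have \<phi>: "\<phi> \<in> Hom C X X" using msub_hom[OF idm_hom[OF h(2)] ip] \<phi>_def by simp
  have pip: "cmp C p (cmp C i p) = p" using cmp_assoc[OF h(5) i h(5)] pi cmp_idm_left[OF h(5)] by simp
  have "cmp C p \<phi> = zer C X A"
    using cmp_msub_right[OF idm_hom[OF h(2)] ip h(5)] cmp_idm_right[OF h(5)] pip msub_self[OF h(5)]
    unfolding \<phi>_def by simp
  then obtain q where q: "q \<in> Hom C X B" "cmp C u q = \<phi>" using tri_cov_exact[OF T \<phi>] by blast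
  have "cmp C (cmp C i p) u = zer C B X"
    using cmp_assoc[OF h(4) h(5) i] tri_cmp_zer[OF T] cmp_zer_right[OF i h(1)] by simp
  then have \<phi>u: "cmp C \<phi> u = u"
    using cmp_msub_left[OF h(4) idm_hom[OF h(2)] ip] cmp_idm_left[OF h(4)] msub_zer[OF h(4)]
    unfolding \<phi>_def by simp
  have qu: "cmp C q u \<in> Hom C B B" using cmp_hom[OF h(4) q(1)] .
  have "cmp C u (msub C (cmp C q u) (idm C B)) = zer C B X"
    using cmp_msub_right[OF qu idm_hom[OF h(1)] h(4)] cmp_assoc[OF h(4) q(1) h(4)] q(2) \<phi>u
      cmp_idm_right[OF h(4)] msub_self[OF h(4)] by simp
  then have "msub C (cmp C q u) (idm C B) = zer C B B"
    using tri_zer_third_mono[OF T msub_hom[OF qu idm_hom[OF h(1)]]] by blast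
  then have qu_id: "cmp C q u = idm C B" using msub_eq_zerD[OF qu idm_hom[OF h(1)]] by blast
  have "cmp C u (cmp C q i) = msub C i (cmp C (cmp C i p) i)"
    using cmp_assoc[OF i q(1) h(4)] q(2) cmp_msub_left[OF i idm_hom[OF h(2)] ip] cmp_idm_left[OF i]
    unfolding \<phi>_def by simp
  also have "\<dots> = zer C A X"
    using cmp_assoc[OF i h(5) i] pi cmp_idm_right[OF i] msub_self[OF i] by simp
  finally have qi: "cmp C q i = zer C A B" using tri_zer_third_mono[OF T cmp_hom[OF i q(1)]] by blast
  have "madd C (cmp C i p) (cmp C u q) = idm C X"
    using madd_msub_cancel[OF idm_hom[OF h(2)] ip] q(2) unfolding \<phi>_def by simp
  then show ?thesis using q(1) qu_id qi by blast
qed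

lemma biprod_pairI:
  assumes i: "i \<in> Hom C A X" and p: "p \<in> Hom C X A"
    and u: "u \<in> Hom C B X" and q: "q \<in> Hom C X B"
    and pi: "cmp C p i = idm C A" and qu: "cmp C q u = idm C B"
    and pu: "cmp C p u = zer C B A" and qi: "cmp C q i = zer C A B"
    and sum: "madd C (cmp C i p) (cmp C u q) = idm C X"
  shows "biprod C {0, 1} (\<lambda>k. if k = 0 then A else B) X
    (\<lambda>k. if k = 0 then i else u) (\<lambda>k. if k = 0 then p else q)"
  unfolding biprod_def
proof (intro conjI)
  show "finite {0, 1::nat}" by simp
  show "X \<in> Ob C" using hom_obD[OF i] by blast
  show "\<forall>k \<in> {0, 1}. (if k = 0 then A else B) \<in> Ob C \<and>
      (if k = 0 then i else u) \<in> Hom C (if k = 0 then A else B) X \<and>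
      (if k = 0 then p else q) \<in> Hom C X (if k = 0 then A else B)"
    using i p u q hom_obD by auto
  show "\<forall>k \<in> {0, 1}. \<forall>l \<in> {0, 1}.
      cmp C (if k = 0 then p else q) (if l = 0 then i else u) =
      (if k = l then idm C (if k = 0 then A else B)
       else zer C (if l = 0 then A else B) (if k = 0 then A else B))"
    using pi qu pu qi by auto
  have sorted: "sorted_list_of_set {0, 1::nat} = [0, 1]" by simp
  show "msum C X X (map (\<lambda>k. cmp C (if k = 0 then i else u) (if k = 0 then p else q))
      (sorted_list_of_set {0, 1::nat})) = idm C X"
    unfolding msum_def sorted using sum madd_zer[OF cmp_hom[OF q u]] by simp
qed

lemma indecomposable_split_epi:
  assumes X: "indecomposable C X" and A: "\<not> is_zero C A"
    and i: "i \<in> Hom C A X" and p: "p \<in> Hom C X A" and pi: "cmp C p i = idm C A"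
  shows "cmp C i p = idm C X"
proof -
  obtain B u where T: "(B, X, A, u, p, zer C A (shO C B)) \<in> Tri C"
    using split_epi_tri_zer[OF p i pi] by blast
  note h = tri_homs[OF T]
  obtain q where q: "q \<in> Hom C X B" and qu: "cmp C q u = idm C B" and qi: "cmp C q i = zer C A B"
    and sum: "madd C (cmp C i p) (cmp C u q) = idm C X"
    using tri_zer_third_split[OF T i pi] by blast
  have "biprod C {0, 1} (\<lambda>k. if k = 0 then A else B) X
      (\<lambda>k. if k = 0 then i else u) (\<lambda>k. if k = 0 then p else q)"
    using biprod_pairI[OF i p h(4) q pi qu tri_cmp_zer[OF T] qi sum] .
  then have "is_zero C B" using X A unfolding indecomposable_def by fastforce
  then have "cmp C u q = zer C X X"
    using is_zero_tgt[OF _ q] cmp_zer_right[OF h(4) h(2)] by simp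
  then show ?thesis using sum madd_zer[OF cmp_hom[OF p i]] by simp
qed

lemma is_iso_conj:
  assumes i: "i \<in> Hom C A X" and p: "p \<in> Hom C X A"
    and pi: "cmp C p i = idm C A" and ip: "cmp C i p = idm C X"
    and \<chi>: "\<chi> \<in> Hom C X X" and iso: "is_iso C A A (cmp C p (cmp C \<chi> i))"
  shows "is_iso C X X \<chi>"
proof -
  obtain g where g: "g \<in> Hom C A A" "cmp C g (cmp C p (cmp C \<chi> i)) = idm C A"
    "cmp C (cmp C p (cmp C \<chi> i)) g = idm C A" using iso unfolding is_iso_def by blast
  have ci: "cmp C \<chi> i \<in> Hom C A X" using cmp_hom i \<chi> by blast
  have pc: "cmp C p \<chi> \<in> Hom C X A" using cmp_hom p \<chi> by blast
  define h where "h = cmp C i (cmp C g p)"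
  have gp: "cmp C g p \<in> Hom C X A" using cmp_hom g p by blast
  have h: "h \<in> Hom C X X" using cmp_hom gp i h_def by blast
  have e1: "cmp C \<chi> i = cmp C i (cmp C p (cmp C \<chi> i))"
    using cmp_assoc[OF ci p i] ip cmp_idm_left ci by metis
  have e2: "cmp C p \<chi> = cmp C (cmp C p (cmp C \<chi> i)) p"
    using cmp_assoc[OF p i pc] cmp_assoc[OF i \<chi> p] ip cmp_idm_right pc by metis
  have "cmp C \<chi> h = cmp C (cmp C \<chi> i) (cmp C g p)" using cmp_assoc[OF gp i \<chi>] h_def by simp
  also have "\<dots> = cmp C i (cmp C (cmp C p (cmp C \<chi> i)) (cmp C g p))"
    using e1 cmp_assoc[OF gp cmp_hom[OF ci p] i] by metis
  also have "\<dots> = idm C X" using cmp_assoc[OF p g(1) cmp_hom[OF ci p]] g(3) cmp_idm_left p ip by metis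
  finally have r1: "cmp C \<chi> h = idm C X" .
  have "cmp C h \<chi> = cmp C i (cmp C g (cmp C p \<chi>))"
    using cmp_assoc[OF \<chi> p g(1)] cmp_assoc[OF \<chi> gp i] h_def by metis
  also have "\<dots> = cmp C i (cmp C (cmp C g (cmp C p (cmp C \<chi> i))) p)"
    using e2 cmp_assoc[OF p cmp_hom[OF ci p] g(1)] by metis
  also have "\<dots> = idm C X" using g(2) cmp_idm_left p ip by metis
  finally have r2: "cmp C h \<chi> = idm C X" .
  show ?thesis unfolding is_iso_def using \<chi> h r1 r2 by blast
qed

text \<open>The first local summand in the Krull--Schmidt decomposition of \<open>X\<close> is already
  all of \<open>X\<close>, so locality transfers to \<open>X\<close>.\<close>
lemma indecomposable_local:
  assumes X: "indecomposable C X" and \<psi>: "\<psi> \<in> Hom C X X"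
  shows "is_iso C X X \<psi> \<or> is_iso C X X (msub C (idm C X) \<psi>)"
proof -
  have Xob: "X \<in> Ob C" using X unfolding indecomposable_def by blast
  obtain n A \<iota> \<pi> where b: "biprod C {..<n} A X \<iota> \<pi>" and loc: "\<forall>k < n. local_end C (A k)"
    using krull_schmidt_C Xob unfolding krull_schmidt_def by blast
  have n: "0 < n"
  proof (rule ccontr)
    assume "\<not> 0 < n"
    then have "zer C X X = idm C X" using b unfolding biprod_def msum_def by simp
    then show False using X Xob unfolding indecomposable_def is_zero_def by simp
  qed
  have \<iota>: "\<iota> 0 \<in> Hom C (A 0) X" and \<pi>: "\<pi> 0 \<in> Hom C X (A 0)"
    and \<pi>\<iota>: "cmp C (\<pi> 0) (\<iota> 0) = idm C (A 0)"
    using b n unfolding biprod_def by auto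
  have lA: "local_end C (A 0)" using loc n by blast
  then have "\<not> is_zero C (A 0)" unfolding local_end_def is_zero_def by blast
  then have \<iota>\<pi>: "cmp C (\<iota> 0) (\<pi> 0) = idm C X" using indecomposable_split_epi[OF X _ \<iota> \<pi> \<pi>\<iota>] by blast
  define f where "f = cmp C (\<pi> 0) (cmp C \<psi> (\<iota> 0))"
  have f: "f \<in> Hom C (A 0) (A 0)" using cmp_hom \<iota> \<pi> \<psi> f_def by metis
  have \<psi>': "msub C (idm C X) \<psi> \<in> Hom C X X" using msub_hom[OF idm_hom[OF Xob] \<psi>] .
  have "cmp C (\<pi> 0) (cmp C (msub C (idm C X) \<psi>) (\<iota> 0)) = msub C (idm C (A 0)) f"
    using cmp_msub_left[OF \<iota> idm_hom[OF Xob] \<psi>] cmp_idm_left[OF \<iota>]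
      cmp_msub_right[OF \<iota> cmp_hom[OF \<iota> \<psi>] \<pi>] \<pi>\<iota> f_def by simp
  moreover have "is_iso C (A 0) (A 0) f \<or> is_iso C (A 0) (A 0) (msub C (idm C (A 0)) f)"
    using lA f unfolding local_end_def by blast
  ultimately show ?thesis using is_iso_conj[OF \<iota> \<pi> \<pi>\<iota> \<iota>\<pi>] \<psi> \<psi>' f_def by metis
qed


lemma tri_endo_lift:
  assumes T: "(K, Q, Th, a, b, c) \<in> Tri C" and hQ: "homzero C Q (shO C K)"
    and e: "e \<in> Hom C Th Th"
  shows "\<exists>\<psi> \<in> Hom C Q Q. cmp C b \<psi> = cmp C e b"
proof -
  note h = tri_homs[OF T]
  have eb: "cmp C e b \<in> Hom C Q Th" using cmp_hom[OF h(5) e] .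
  have "cmp C c (cmp C e b) = zer C Q (shO C K)" using homzero_D[OF hQ cmp_hom[OF eb h(6)]] .
  then show ?thesis using tri_cov_exact[OF tri_rotate[OF T] eb] by blast
qed

lemma is_iso_cmp_zer_cancel:
  assumes \<psi>: "is_iso C X X \<psi>" and f: "f \<in> Hom C X Y" and f\<psi>: "cmp C f \<psi> = zer C X Y"
  shows "f = zer C X Y"
proof -
  obtain \<psi>' where \<psi>': "\<psi>' \<in> Hom C X X" "cmp C \<psi> \<psi>' = idm C X" and \<psi>h: "\<psi> \<in> Hom C X X"
    using \<psi> unfolding is_iso_def by blast
  have "f = cmp C (cmp C f \<psi>) \<psi>'"
    using cmp_idm_right[OF f] cmp_assoc[OF \<psi>'(1) \<psi>h f] \<psi>'(2) by simp
  then show ?thesis using f\<psi> cmp_zer_left[OF \<psi>'(1)] hom_obD[OF f] by simp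
qed

lemma is_iso_complement_fixed_zer:
  assumes iso: "is_iso C X X (msub C (idm C X) \<psi>)" and \<psi>: "\<psi> \<in> Hom C X X"
    and f: "f \<in> Hom C X Y" and f\<psi>: "cmp C f \<psi> = f"
  shows "f = zer C X Y"
proof -
  have "cmp C f (msub C (idm C X) \<psi>) = zer C X Y"
    using cmp_msub_right[OF idm_hom[OF hom_obD[THEN conjunct1, OF f]] \<psi> f] cmp_idm_right[OF f]
      f\<psi> msub_self[OF f] by simp
  then show ?thesis using is_iso_cmp_zer_cancel[OF iso f] by blast
qed

lemma tri_retract_is_zero:
  assumes T: "(K, Q, Th, a, b, c) \<in> Tri C" and hK: "homzero C (shO C K) Th"
    and p: "p \<in> Hom C Th B" and i: "i \<in> Hom C B Th" and pi: "cmp C p i = idm C B"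
    and pb: "cmp C p b = zer C Q B"
  shows "is_zero C B"
proof -
  note h = tri_homs[OF T]
  have B: "B \<in> Ob C" using hom_obD[OF p] by blast
  obtain g where g: "g \<in> Hom C (shO C K) B" "cmp C g c = p"
    using tri_contra_exact[OF tri_rotate[OF T] p pb] by blast
  have "g = cmp C p (cmp C i g)"
    using cmp_assoc[OF g(1) i p] pi cmp_idm_left[OF g(1)] by simp
  also have "\<dots> = zer C (shO C K) B"
    using homzero_D[OF hK cmp_hom[OF g(1) i]] cmp_zer_right[OF p shO_ob[OF h(1)]] by simp
  finally have "p = zer C Th B" using g(2) cmp_zer_left[OF h(6) B] by simp
  then have "idm C B = zer C B B" using pi cmp_zer_left[OF i B] by simp
  then show ?thesis unfolding is_zero_def using B by blast
qed

lemma tri_third_indecomposable: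
  assumes T: "(K, Q, Th, a, b, c) \<in> Tri C" and Q: "indecomposable C Q"
    and Th: "\<not> is_zero C Th"
    and hQ: "homzero C Q (shO C K)" and hK: "homzero C (shO C K) Th"
  shows "indecomposable C Th"
  unfolding indecomposable_def
proof (intro conjI allI impI)
  note h = tri_homs[OF T]
  show "Th \<in> Ob C" using h(3) .
  show "\<not> is_zero C Th" using Th .
  fix A \<iota> \<pi> assume "biprod C {0, 1} A Th \<iota> \<pi>"
  then have \<iota>0: "\<iota> 0 \<in> Hom C (A 0) Th" and \<iota>1: "\<iota> 1 \<in> Hom C (A 1) Th"
    and \<pi>0: "\<pi> 0 \<in> Hom C Th (A 0)" and \<pi>1: "\<pi> 1 \<in> Hom C Th (A 1)"
    and \<pi>0\<iota>0: "cmp C (\<pi> 0) (\<iota> 0) = idm C (A 0)" and \<pi>1\<iota>1: "cmp C (\<pi> 1) (\<iota> 1) = idm C (A 1)"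
    and \<pi>1\<iota>0: "cmp C (\<pi> 1) (\<iota> 0) = zer C (A 0) (A 1)"
    unfolding biprod_def by auto
  define e where "e = cmp C (\<iota> 0) (\<pi> 0)"
  have e: "e \<in> Hom C Th Th" using cmp_hom[OF \<pi>0 \<iota>0] e_def by simp
  have \<pi>0e: "cmp C (\<pi> 0) e = \<pi> 0"
    using cmp_assoc[OF \<pi>0 \<iota>0 \<pi>0] \<pi>0\<iota>0 cmp_idm_left[OF \<pi>0] e_def by simp
  have \<pi>1e: "cmp C (\<pi> 1) e = zer C Th (A 1)"
    using cmp_assoc[OF \<pi>0 \<iota>0 \<pi>1] \<pi>1\<iota>0 cmp_zer_left[OF \<pi>0] hom_obD[OF \<pi>1] e_def by simp
  obtain \<psi> where \<psi>: "\<psi> \<in> Hom C Q Q" and b\<psi>: "cmp C b \<psi> = cmp C e b"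
    using tri_endo_lift[OF T hQ e] by blast
  consider "is_iso C Q Q \<psi>" | "is_iso C Q Q (msub C (idm C Q) \<psi>)"
    using indecomposable_local[OF Q \<psi>] by blast
  then show "is_zero C (A 0) \<or> is_zero C (A 1)"
  proof cases
    case 1
    have "cmp C (cmp C (\<pi> 1) b) \<psi> = cmp C (cmp C (\<pi> 1) e) b"
      using cmp_assoc[OF \<psi> h(5) \<pi>1] b\<psi> cmp_assoc[OF h(5) e \<pi>1] by simp
    then have "cmp C (cmp C (\<pi> 1) b) \<psi> = zer C Q (A 1)"
      using \<pi>1e cmp_zer_left[OF h(5)] hom_obD[OF \<pi>1] by simp
    then have "cmp C (\<pi> 1) b = zer C Q (A 1)"
      using is_iso_cmp_zer_cancel[OF 1 cmp_hom[OF h(5) \<pi>1]] by blast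
    then show ?thesis using tri_retract_is_zero[OF T hK \<pi>1 \<iota>1 \<pi>1\<iota>1] by blast
  next
    case 2
    have \<pi>0b: "cmp C (\<pi> 0) b \<in> Hom C Q (A 0)" using cmp_hom[OF h(5) \<pi>0] .
    have "cmp C (cmp C (\<pi> 0) b) \<psi> = cmp C (\<pi> 0) b"
      using cmp_assoc[OF \<psi> h(5) \<pi>0] b\<psi> cmp_assoc[OF h(5) e \<pi>0] \<pi>0e by simp
    then have "cmp C (\<pi> 0) b = zer C Q (A 0)"
      using is_iso_complement_fixed_zer[OF 2 \<psi> \<pi>0b] by blast
    then show ?thesis using tri_retract_is_zero[OF T hK \<pi>0 \<iota>0 \<pi>0\<iota>0] by blast
  qed
qed

end

locale theta_projective = artin_triangulated C
  for C :: "('o, 'm, 'r::comm_ring_1) tcat" +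
  fixes t :: nat and le :: "nat \<Rightarrow> nat \<Rightarrow> bool"
    and \<Theta> Q K :: "nat \<Rightarrow> 'o" and \<alpha> \<beta> \<gamma> :: "nat \<Rightarrow> 'm"
  assumes theta_proj_system: "theta_proj_system C t le \<Theta> Q K \<alpha> \<beta> \<gamma>"
begin

lemma lin_order: "lin_order_on {1..t} le"
  and Theta_ob: "i \<in> {1..t} \<Longrightarrow> \<Theta> i \<in> Ob C"
  and Theta_nonzero: "i \<in> {1..t} \<Longrightarrow> \<not> is_zero C (\<Theta> i)"
  and Theta_homzero: "i \<in> {1..t} \<Longrightarrow> j \<in> {1..t} \<Longrightarrow> le i j \<Longrightarrow> j \<noteq> i \<Longrightarrow>
    homzero C (\<Theta> j) (\<Theta> i)"
  and Q_indecomposable: "i \<in> {1..t} \<Longrightarrow> indecomposable C (Q i)"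
  and tri: "i \<in> {1..t} \<Longrightarrow> (K i, Q i, \<Theta> i, \<alpha> i, \<beta> i, \<gamma> i) \<in> Tri C"
  and K_filt: "i \<in> {1..t} \<Longrightarrow> filt C {\<Theta> j | j. j \<in> {1..t} \<and> le i j \<and> j \<noteq> i} (K i)"
  and shO_K_homzero_Theta: "i \<in> {1..t} \<Longrightarrow> homzero C (shO C (K i)) (\<Theta> i)"
  using theta_proj_system unfolding theta_proj_system_def by blast+

lemma Q_homzero_shifted_Theta:
  assumes "i \<in> {1..t}" "j \<in> {1..t}"
  shows "homzero C (Q i) (shO C (\<Theta> j))" and "homzero C (Q i) (shinv C (\<Theta> j))"
proof -
  obtain S \<iota> \<pi> where "biprod C {1..t} Q S \<iota> \<pi>"
    and "\<forall>j \<in> {1..t}. homzero C S (shO C (\<Theta> j)) \<and> homzero C S (shinv C (\<Theta> j))"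
    using theta_proj_system unfolding theta_proj_system_def by blast
  then show "homzero C (Q i) (shO C (\<Theta> j))" and "homzero C (Q i) (shinv C (\<Theta> j))"
    using biprod_summand_homzero assms by blast+
qed

lemma K_homzero_Theta:
  assumes i: "i \<in> {1..t}" and j: "j \<in> {1..t}" and le: "le i j"
  shows "homzero C (K j) (\<Theta> i)"
proof (rule filt_homzero_src[OF K_filt[OF j] Theta_ob[OF i]], safe)
  fix l assume l: "l \<in> {1..t}" "le j l" "l \<noteq> j"
  have "le i l" and "l \<noteq> i"
    using lin_order i j l le unfolding lin_order_on_def by blast+
  then show "homzero C (\<Theta> l) (\<Theta> i)" using Theta_homzero i l by blast
qed

lemma Theta_indecomposable:
  assumes i: "i \<in> {1..t}"
  shows "indecomposable C (\<Theta> i)"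
proof (rule tri_third_indecomposable[OF tri[OF i] Q_indecomposable[OF i] Theta_nonzero[OF i] _
      shO_K_homzero_Theta[OF i]])
  show "homzero C (Q i) (shO C (K i))"
    using filt_homzero_shO_tgt[OF K_filt[OF i] tri_homs(2)[OF tri[OF i]]]
      Q_homzero_shifted_Theta(1)[OF i] by blast
qed

lemma Theta_homzero_shO_Theta:
  assumes i: "i \<in> {1..t}" and j: "j \<in> {1..t}" and le: "le i j"
  shows "homzero C (\<Theta> j) (shO C (\<Theta> i))"
  using tri_homzero_middle_src[OF tri_rotate[OF tri[OF j]] Q_homzero_shifted_Theta(1)[OF j i]
      homzero_shO[OF K_homzero_Theta[OF i j le]]] .

lemma Theta_homzero_shinv_Theta:
  assumes i: "i \<in> {1..t}" and j: "j \<in> {1..t}"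
    and K2: "homzero C (shO C (shO C (K i))) (\<Theta> j)"
  shows "homzero C (\<Theta> i) (shinv C (\<Theta> j))"
proof -
  have "homzero C (shO C (K i)) (shinv C (\<Theta> j))"
    using homzero_shO_cancel[OF shO_ob[OF tri_homs(1)[OF tri[OF i]]] shinv_ob[OF Theta_ob[OF j]]]
      K2 shO_shinv[OF Theta_ob[OF j]] by simp
  then show ?thesis
    using tri_homzero_middle_src[OF tri_rotate[OF tri[OF i]] Q_homzero_shifted_Theta(2)[OF i j]] by blast
qed

end

theorem corollary6p3:
  fixes C :: "('o, 'm, 'r::comm_ring_1) tcat"
    and t :: nat and le :: "nat \<Rightarrow> nat \<Rightarrow> bool"
    and \<Theta> Q K :: "nat \<Rightarrow> 'o" and \<alpha> \<beta> \<gamma> :: "nat \<Rightarrow> 'm"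
  assumes "artin_tri_cat C"
    and "theta_proj_system C t le \<Theta> Q K \<alpha> \<beta> \<gamma>"
    and "\<forall>i \<in> {1..t}. \<forall>j \<in> {1..t}. homzero C (shO C (shO C (K j))) (\<Theta> i)"
  shows "theta_system C t le \<Theta>"
proof -
  interpret theta_projective C t le \<Theta> Q K \<alpha> \<beta> \<gamma>
    using assms(1,2) by unfold_locales
  show ?thesis
    unfolding theta_system_def
    using lin_order Theta_indecomposable Theta_homzero Theta_homzero_shO_Theta
      Theta_homzero_shinv_Theta assms(3) by blast
qed

end
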